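(* Let $n\in\mathbb{N}$ and $0\leq\delta\leq n-1$, let $q$ be a prime power with $n\leq q-1$, $\mathbb{F}:=\mathbb{F}_q$, and $\alpha\in\mathbb{F}$ with $\mathrm{ord}(\alpha)\geq n$. Let \[ G:=\sum_{\nu=0}^{\delta}z^\nu\begin{pmatrix}1&\alpha^\nu&\alpha^{2\nu}&\ldots&\alpha^{(n-1)\nu}\end{pmatrix}\in\mathbb{F}[z]^{1\times n} \] and $\mathcal{C}:=\mathrm{im}\,G\subseteq\mathbb{F}[z]^n$. For $j\geq\delta+1$ define the $j$th extended row distance \[ \hat d^r_j:=\min\{\mathrm{wt}(uG)\mid u\in\mathbb{F}[z],\ u_0\neq0,\ \deg u=j-\delta-1,\ \text{no }\delta\text{ consecutive coefficients of }u\text{ are zero}\}, \] where $u=\sum_i u_iz^i$. Then $\hat d^r_j\geq (n-\delta)j+\delta(\delta+1)$ for all $j\geq\delta+1$.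
   Context: $\mathrm{ord}(\alpha)$ is the multiplicative order of $\alpha$. For $v=\sum_{j=0}^N v_jz^j\in\mathbb{F}[z]^n$ with $v_j\in\mathbb{F}^n$, $\mathrm{wt}(v)=\sum_j\mathrm{wt}(v_j)$ where $\mathrm{wt}(v_j)$ is the Hamming weight. The "consecutive coefficients of $u$" refer to the coefficients $u_0,\ldots,u_{\deg u}$. *)

theory Defs
  imports "HOL-Computational_Algebra.Polynomial" "HOL-Computational_Algebra.Primes"
          "HOL-Library.Extended_Nat" "HOL-Library.Cardinality"
begin

definition mult_ord :: "'a::field \<Rightarrow> nat" where
  "mult_ord a = (if \<exists>k>0. a ^ k = 1 then (LEAST k. 0 < k \<and> a ^ k = 1) else 0)"

text \<open>Elements of F[z]^n are modelled as functions nat => 'a poly, component i for i < n.\<close>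
definition genG :: "nat \<Rightarrow> 'a::field \<Rightarrow> nat \<Rightarrow> 'a poly" where
  "genG \<delta> \<alpha> i = (\<Sum>\<nu>\<le>\<delta>. monom (\<alpha> ^ (i * \<nu>)) \<nu>)"

definition wt_vec :: "nat \<Rightarrow> (nat \<Rightarrow> 'a::zero poly) \<Rightarrow> nat" where
  "wt_vec n v = (\<Sum>i<n. card {j. coeff (v i) j \<noteq> 0})"

definition no_consec_zeros :: "nat \<Rightarrow> 'a::zero poly \<Rightarrow> bool" where
  "no_consec_zeros \<delta> u =
     (\<forall>i. i + \<delta> \<le> degree u + 1 \<longrightarrow> (\<exists>k\<in>{i..<i+\<delta>}. coeff u k \<noteq> 0))"

text \<open>j-th extended row distance (minimum over the admissible u; the minimum of the
  empty set is infinity).\<close>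
definition ext_row_dist :: "nat \<Rightarrow> nat \<Rightarrow> 'a::field \<Rightarrow> nat \<Rightarrow> enat" where
  "ext_row_dist n \<delta> \<alpha> j =
     Inf {enat (wt_vec n (\<lambda>i. u * genG \<delta> \<alpha> i)) | u.
            coeff u 0 \<noteq> 0 \<and> degree u = j - \<delta> - 1 \<and> no_consec_zeros \<delta> u}"

end

theory Submission
  imports Defs
begin

text \<open>The k-th coefficient vector of u G is the evaluation of the polynomial
  W_k(x) = u_k + u_{k-1} x + ... + u_{k-min(delta,k)} x^min(delta,k) (here coeff_window delta u k)
  at the points 1, alpha, ..., alpha^(n-1), which are distinct and nonzero since ord(alpha) >= n.
  For k <= deg u + delta the polynomial W_k is nonzero because no delta consecutive coefficients
  of u vanish, and it is divisible by x^(k - deg u), so it has at most min(delta,k) - (k - deg u)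
  nonzero roots. Hence at least n - min(delta,k) + (k - deg u) entries of the k-th coefficient
  vector are nonzero, and summing over k gives the bound. Only ord(alpha) >= n is used.\<close>

lemma card_nonzero_roots_le:
  fixes P :: "'a::idom poly"
  assumes "P \<noteq> 0" and "\<forall>k<a. coeff P k = 0"
  shows "card {x. x \<noteq> 0 \<and> poly P x = 0} \<le> degree P - a"
proof -
  obtain R where PR: "P = monom 1 a * R"
    using assms(2) monom_1_dvd_iff' by blast
  have R0: "R \<noteq> 0" using assms(1) PR by auto
  have deg: "degree P = a + degree R"
    using PR R0 by (simp add: degree_mult_eq degree_monom_eq)
  have "{x. x \<noteq> 0 \<and> poly P x = 0} \<subseteq> {x. poly R x = 0}"
    by (auto simp: PR poly_monom)
  then have "card {x. x \<noteq> 0 \<and> poly P x = 0} \<le> card {x. poly R x = 0}"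
    by (intro card_mono poly_roots_finite R0)
  also have "\<dots> \<le> degree R" by (rule card_poly_roots_bound[OF R0])
  finally show ?thesis using deg by simp
qed

lemma card_nonroots_ge:
  fixes P :: "'a::idom poly"
  assumes "P \<noteq> 0" "finite I" "inj_on f I" "\<forall>i\<in>I. f i \<noteq> 0"
  shows "card I - card {x. x \<noteq> 0 \<and> poly P x = 0} \<le> card {i\<in>I. poly P (f i) \<noteq> 0}"
proof -
  have "card {i\<in>I. poly P (f i) = 0} \<le> card {x. x \<noteq> 0 \<and> poly P x = 0}"
  proof (rule card_inj_on_le)
    show "inj_on f {i\<in>I. poly P (f i) = 0}" using assms(3) by (rule inj_on_subset) auto
    show "f ` {i\<in>I. poly P (f i) = 0} \<subseteq> {x. x \<noteq> 0 \<and> poly P x = 0}" using assms(4) by auto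
    show "finite {x. x \<noteq> 0 \<and> poly P x = 0}" using poly_roots_finite[OF assms(1)] by simp
  qed
  moreover have "card I = card {i\<in>I. poly P (f i) = 0} + card {i\<in>I. poly P (f i) \<noteq> 0}"
    using assms(2) by (subst card_Un_disjoint[symmetric]) (auto intro: arg_cong[where f = card])
  ultimately show ?thesis by linarith
qed

lemma sum_card_swap:
  assumes "finite A" "finite B"
  shows "(\<Sum>a\<in>A. card {b\<in>B. R a b}) = (\<Sum>b\<in>B. card {a\<in>A. R a b})"
proof -
  have "(\<Sum>a\<in>A. card {b\<in>B. R a b}) = (\<Sum>a\<in>A. \<Sum>b\<in>B. if R a b then 1 else 0)"
    using assms(2) by (simp add: sum.If_cases Int_def)
  also have "\<dots> = (\<Sum>b\<in>B. \<Sum>a\<in>A. if R a b then 1 else 0)"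
    by (rule sum.swap)
  also have "\<dots> = (\<Sum>b\<in>B. card {a\<in>A. R a b})"
    using assms(1) by (simp add: sum.If_cases Int_def)
  finally show ?thesis .
qed

lemma sum_min_diff_atMost: "(\<Sum>k\<le>m + d. min d k - (k - m)) = m * d" for m d :: nat
proof (induction d)
  case 0
  then show ?case by simp
next
  case (Suc d)
  have "(\<Sum>k\<le>m + Suc d. min (Suc d) k - (k - m)) = (\<Sum>k\<le>m + d. min (Suc d) k - (k - m))"
    by simp
  also have "\<dots> = (\<Sum>k\<le>m + d. (min d k - (k - m)) + (if d < k then 1 else 0))"
    by (rule sum.cong) auto
  also have "\<dots> = m * d + card {k. k \<le> m + d \<and> d < k}"
    by (simp only: sum.distrib Suc.IH) (simp add: sum.If_cases Int_def)
  also have "{k. k \<le> m + d \<and> d < k} = {d<..m + d}" by auto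
  finally show ?case by simp
qed

lemma mult_ord_le:
  assumes "0 < k" "a ^ k = 1"
  shows "mult_ord a \<le> k"
  unfolding mult_ord_def using assms by (auto intro!: Least_le)

lemma mult_ord_pos_imp_nonzero:
  assumes "0 < mult_ord a"
  shows "a \<noteq> 0"
proof
  assume "a = 0"
  then have "\<not> (\<exists>k>0. a ^ k = 1)" by (simp add: power_0_left)
  with assms show False by (simp add: mult_ord_def)
qed

lemma inj_on_power_mult_ord: "inj_on (\<lambda>i. a ^ i) {..<mult_ord a}"
proof -
  have "a ^ i \<noteq> a ^ l" if "i < l" "l < mult_ord a" for i l
  proof
    assume "a ^ i = a ^ l"
    also have "a ^ l = a ^ i * a ^ (l - i)"
      using that(1) by (simp flip: power_add)
    finally have "a ^ (l - i) = 1"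
      using mult_ord_pos_imp_nonzero[of a] that by simp
    then have "mult_ord a \<le> l - i" using that(1) by (intro mult_ord_le) auto
    with that show False by simp
  qed
  then show ?thesis
    unfolding inj_on_def by (metis lessThan_iff linorder_neqE_nat)
qed

definition coeff_window :: "nat \<Rightarrow> 'a::comm_monoid_add poly \<Rightarrow> nat \<Rightarrow> 'a poly" where
  "coeff_window \<delta> u k = (\<Sum>\<nu>\<le>min \<delta> k. monom (coeff u (k - \<nu>)) \<nu>)"

lemma coeff_coeff_window:
  "coeff (coeff_window \<delta> u k) t = (if t \<le> min \<delta> k then coeff u (k - t) else 0)"
  unfolding coeff_window_def coeff_sum coeff_monom by (simp add: sum.delta)

lemma coeff_window_eq_0: "degree u + \<delta> < k \<Longrightarrow> coeff_window \<delta> u k = 0"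
  by (rule poly_eqI) (auto simp: coeff_coeff_window intro!: coeff_eq_0)

lemma degree_coeff_window_le: "degree (coeff_window \<delta> u k) \<le> min \<delta> k"
  by (rule degree_le) (auto simp: coeff_coeff_window)

lemma coeff_coeff_window_below: "t + degree u < k \<Longrightarrow> coeff (coeff_window \<delta> u k) t = 0"
  by (auto simp: coeff_coeff_window intro!: coeff_eq_0)

lemma coeff_window_nonzero:
  assumes "coeff u 0 \<noteq> 0" "no_consec_zeros \<delta> u" "k \<le> degree u + \<delta>"
  shows "coeff_window \<delta> u k \<noteq> 0"
proof -
  have "\<exists>l\<in>{k - min \<delta> k..k}. coeff u l \<noteq> 0"
  proof (cases "k < \<delta>")
    case True
    then show ?thesis using assms(1) by auto
  next
    case False
    show ?thesis
    proof (cases "degree u < k")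
      case True
      have "lead_coeff u \<noteq> 0" using assms(1) by auto
      then show ?thesis using True False assms(3) by (intro bexI[of _ "degree u"]) auto
    next
      case False
      with \<open>\<not> k < \<delta>\<close> obtain l where "l \<in> {k - \<delta>..<k}" "coeff u l \<noteq> 0"
        using assms(2) unfolding no_consec_zeros_def
        by (metis add.commute le_add_diff_inverse2 not_le Suc_eq_plus1 le_SucI)
      then show ?thesis using \<open>\<not> k < \<delta>\<close> by auto
    qed
  qed
  then obtain l where "l \<le> k" "k - l \<le> min \<delta> k" "coeff u l \<noteq> 0" by auto
  then have "coeff (coeff_window \<delta> u k) (k - l) \<noteq> 0" by (simp add: coeff_coeff_window)
  then show ?thesis by auto
qed

lemma card_nonzero_roots_coeff_window_le:
  fixes u :: "'a::idom poly"
  assumes "coeff u 0 \<noteq> 0" "no_consec_zeros \<delta> u" "k \<le> degree u + \<delta>"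
  shows "card {x. x \<noteq> 0 \<and> poly (coeff_window \<delta> u k) x = 0} \<le> min \<delta> k - (k - degree u)"
  using card_nonzero_roots_le[OF coeff_window_nonzero[OF assms], of "k - degree u"]
    degree_coeff_window_le[of \<delta> u k] coeff_coeff_window_below[of _ u k \<delta>]
  by fastforce

lemma coeff_mult_genG:
  fixes u :: "'a::field poly"
  shows "coeff (u * genG \<delta> \<alpha> i) k = poly (coeff_window \<delta> u k) (\<alpha> ^ i)"
proof -
  have "coeff (u * genG \<delta> \<alpha> i) k = (\<Sum>\<nu>\<le>\<delta>. coeff (monom (\<alpha> ^ (i * \<nu>)) \<nu> * u) k)"
    unfolding genG_def sum_distrib_left coeff_sum by (simp add: mult.commute)
  also have "\<dots> = (\<Sum>\<nu>\<in>{..\<delta>} \<inter> {..k}. (\<alpha> ^ i) ^ \<nu> * coeff u (k - \<nu>))"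
    unfolding sum.inter_restrict[OF finite_atMost] coeff_monom_mult
    by (intro sum.cong) (auto simp: power_mult)
  also have "{..\<delta>} \<inter> {..k} = {..min \<delta> k}"
    by auto
  also have "(\<Sum>\<nu>\<le>min \<delta> k. (\<alpha> ^ i) ^ \<nu> * coeff u (k - \<nu>)) = poly (coeff_window \<delta> u k) (\<alpha> ^ i)"
    by (simp add: coeff_window_def poly_sum poly_monom mult.commute)
  finally show ?thesis .
qed

lemma wt_vec_mult_genG:
  fixes u :: "'a::field poly"
  shows "wt_vec n (\<lambda>i. u * genG \<delta> \<alpha> i) =
    (\<Sum>k\<le>degree u + \<delta>. card {i\<in>{..<n}. poly (coeff_window \<delta> u k) (\<alpha> ^ i) \<noteq> 0})"
proof -
  have rows: "{k. coeff (u * genG \<delta> \<alpha> i) k \<noteq> 0} =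
      {k\<in>{..degree u + \<delta>}. poly (coeff_window \<delta> u k) (\<alpha> ^ i) \<noteq> 0}" for i
    by (auto simp: coeff_mult_genG) (metis coeff_window_eq_0 not_le poly_0)
  show ?thesis
    unfolding wt_vec_def rows by (rule sum_card_swap) auto
qed

lemma wt_vec_mult_genG_ge:
  fixes u :: "'a::field poly" and \<alpha> :: 'a
  assumes "0 < n" "n \<le> mult_ord \<alpha>" "\<delta> \<le> n" "coeff u 0 \<noteq> 0" "no_consec_zeros \<delta> u"
  shows "(n - \<delta>) * (degree u + \<delta> + 1) + \<delta> * (\<delta> + 1) \<le> wt_vec n (\<lambda>i. u * genG \<delta> \<alpha> i)"
proof -
  define m where "m = degree u"
  define roots_bound where "roots_bound k = min \<delta> k - (k - m)" for k
  have inj: "inj_on (\<lambda>i. \<alpha> ^ i) {..<n}"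
    using inj_on_power_mult_ord by (rule inj_on_subset) (use assms(2) in auto)
  have nonzero: "\<forall>i\<in>{..<n}. \<alpha> ^ i \<noteq> 0"
    using mult_ord_pos_imp_nonzero[of \<alpha>] assms(1,2) by simp
  have column: "n - roots_bound k \<le> card {i\<in>{..<n}. poly (coeff_window \<delta> u k) (\<alpha> ^ i) \<noteq> 0}"
    if "k \<le> m + \<delta>" for k
  proof -
    have "card {..<n} - card {x. x \<noteq> 0 \<and> poly (coeff_window \<delta> u k) x = 0}
        \<le> card {i\<in>{..<n}. poly (coeff_window \<delta> u k) (\<alpha> ^ i) \<noteq> 0}"
      using that unfolding m_def
      by (intro card_nonroots_ge coeff_window_nonzero assms(4,5) inj nonzero) auto
    moreover have "card {x. x \<noteq> 0 \<and> poly (coeff_window \<delta> u k) x = 0} \<le> roots_bound k"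
      using that unfolding roots_bound_def m_def
      by (intro card_nonzero_roots_coeff_window_le assms(4,5))
    ultimately show ?thesis by simp
  qed
  have lower: "(\<Sum>k\<le>m + \<delta>. n - roots_bound k) \<le> wt_vec n (\<lambda>i. u * genG \<delta> \<alpha> i)"
    unfolding wt_vec_mult_genG m_def[symmetric] by (rule sum_mono) (use column in auto)
  have "(\<Sum>k\<le>m + \<delta>. n - roots_bound k) + (\<Sum>k\<le>m + \<delta>. roots_bound k) = (\<Sum>k\<le>m + \<delta>. n)"
    unfolding sum.distrib[symmetric] using assms(3) by (intro sum.cong) (auto simp: roots_bound_def)
  then have total: "(\<Sum>k\<le>m + \<delta>. n - roots_bound k) + m * \<delta> = n * (m + \<delta> + 1)"
    unfolding roots_bound_def sum_min_diff_atMost by simp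
  obtain e where n: "n = \<delta> + e"
    using assms(3) le_Suc_ex by blast
  have "n * (m + \<delta> + 1) = (n - \<delta>) * (m + \<delta> + 1) + \<delta> * (\<delta> + 1) + m * \<delta>"
    unfolding n by (simp add: algebra_simps)
  with lower total show ?thesis
    unfolding m_def[symmetric] by linarith
qed

theorem proposition2p4:
  fixes n \<delta> q :: nat and \<alpha> :: "'a::{finite,field}"
  assumes "1 \<le> n" and "\<delta> \<le> n - 1"
    and "\<exists>p k. prime p \<and> 0 < k \<and> q = p ^ k"
    and "CARD('a) = q"
    and "n \<le> q - 1"
    and "mult_ord \<alpha> \<ge> n"
  shows "\<forall>j \<ge> \<delta> + 1. ext_row_dist n \<delta> \<alpha> j \<ge> enat ((n - \<delta>) * j + \<delta> * (\<delta> + 1))"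
proof (intro allI impI)
  fix j assume j: "j \<ge> \<delta> + 1"
  show "ext_row_dist n \<delta> \<alpha> j \<ge> enat ((n - \<delta>) * j + \<delta> * (\<delta> + 1))"
    unfolding ext_row_dist_def
  proof (rule Inf_greatest, clarify)
    fix u :: "'a poly"
    assume u: "coeff u 0 \<noteq> 0" "degree u = j - \<delta> - 1" "no_consec_zeros \<delta> u"
    have "j = degree u + \<delta> + 1"
      using u(2) j by simp
    moreover have "0 < n" "\<delta> \<le> n"
      using assms(1,2) by simp_all
    ultimately have "(n - \<delta>) * j + \<delta> * (\<delta> + 1) \<le> wt_vec n (\<lambda>i. u * genG \<delta> \<alpha> i)"
      using wt_vec_mult_genG_ge[OF _ assms(6) _ u(1,3)] by simp
    then show "enat ((n - \<delta>) * j + \<delta> * (\<delta> + 1)) \<le> enat (wt_vec n (\<lambda>i. u * genG \<delta> \<alpha> i))"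
      by simp
  qed
qed

end
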